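(* Let $\alpha>1$ be fixed, and let $K$ and $J$ be bounded fundamental domains for the lattices $\alpha\mathbb{Z}$ and $\frac1\alpha\mathbb{Z}$ in $\mathbb{R}$, respectively. Then $B_\alpha:=\{\mathcal{Z}_{r,s,\alpha}: r\in J,\ s\in K\}$ is an algebraic basis (Hamel basis) of the complex vector space $V_\alpha:=\mathrm{span}_{\mathbb{C}}\{\mathcal{Z}_{r,s,\alpha}: r,s\in\mathbb{R}\}$ of all finite linear combinations of such measures.
   Context: For $r,s\in\mathbb{R}$ and $\alpha>0$, $\mathcal{Z}_{r,s,\alpha}:=\chi_r\cdot(\delta_s*\delta_{\alpha\mathbb{Z}})=\sum_{m\in\mathbb{Z}}e^{2\pi i r(s+m\alpha)}\delta_{s+m\alpha}$, where $\chi_r(x)=e^{2\pi i rx}$ and $\delta_x$ is the unit point mass at $x$. A fundamental domain for a lattice $L\subset\mathbb{R}$ is a set containing exactly one point of each coset $x+L$. *)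

theory Defs
  imports "HOL-Analysis.Analysis" "HOL-Library.Function_Algebras"
begin

text \<open>A discrete complex measure on the real line supported on a countable set is
  represented by its point-mass weight function (real \<Rightarrow> complex).
  The measure Z_{r,s,alpha} = sum over m of exp(2 pi i r (s + m alpha)) times the
  point mass at s + m alpha is thus the following function.\<close>
definition Zmeas :: "real \<Rightarrow> real \<Rightarrow> real \<Rightarrow> real \<Rightarrow> complex" where
  "Zmeas r s \<alpha> x =
     (if \<exists>m::int. x = s + of_int m * \<alpha>
      then exp (2 * pi * \<i> * complex_of_real (r * x)) else 0)"

definition cscale :: "complex \<Rightarrow> (real \<Rightarrow> complex) \<Rightarrow> (real \<Rightarrow> complex)" where
  "cscale c f = (\<lambda>x. c * f x)"

definition lattice :: "real \<Rightarrow> real set" where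
  "lattice \<beta> = {of_int m * \<beta> | m::int. True}"

definition fundamental_domain :: "real set \<Rightarrow> real set \<Rightarrow> bool" where
  "fundamental_domain L A \<longleftrightarrow> (\<forall>x. \<exists>!y. y \<in> A \<and> y \<in> (\<lambda>l. x + l) ` L)"

end

theory Submission
  imports Defs
begin

text \<open>Translating \<open>s\<close> by \<open>\<alpha>\<int>\<close> leaves \<open>Zmeas r s \<alpha>\<close> unchanged and translating \<open>r\<close> by
  \<open>\<alpha>\<^sup>-\<^sup>1\<int>\<close> multiplies it by a unimodular constant, so every \<open>Zmeas r s \<alpha>\<close> is a multiple of
  one with \<open>r \<in> J\<close>, \<open>s \<in> K\<close>. For independence, evaluate a vanishing combination at the
  points \<open>s\<^sub>0 + m\<alpha>\<close>, \<open>m \<in> \<nat>\<close>: as \<open>K\<close> meets each coset of \<open>\<alpha>\<int>\<close> once, only the terms with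
  \<open>s = s\<^sub>0\<close> survive, leaving \<open>\<Sum>\<^sub>r c\<^sub>r exp(2\<pi>i r s\<^sub>0) \<zeta>\<^sub>r\<^sup>m = 0\<close> for all \<open>m\<close>, where
  \<open>\<zeta>\<^sub>r = exp(2\<pi>i r \<alpha>)\<close>. As \<open>J\<close> meets each coset of \<open>\<alpha>\<^sup>-\<^sup>1\<int>\<close> once, the \<open>\<zeta>\<^sub>r\<close> are distinct,
  and a Vandermonde argument forces all \<open>c\<^sub>r = 0\<close>.\<close>

interpretation cmod: module cscale
  by unfold_locales (auto simp: cscale_def fun_eq_iff algebra_simps)

lemma sum_fun_apply: "(\<Sum>i\<in>A. f i) x = (\<Sum>i\<in>A. f i x)"
  by (induction A rule: infinite_finite_induct) auto

lemma power_sums_eq_0_imp_coeff_eq_0: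
  fixes a g :: "'i \<Rightarrow> 'a :: field"
  assumes "finite T" "inj_on g T" "\<And>m. (\<Sum>i\<in>T. a i * g i ^ m) = 0" "i \<in> T"
  shows "a i = 0"
  using assms
proof (induction T arbitrary: a i rule: finite_induct)
  case empty
  then show ?case by simp
next
  case (insert i0 T)
  define b where "b i = a i * (g i - g i0)" for i
  have b_sums: "(\<Sum>i\<in>T. b i * g i ^ m) = 0" for m
  proof -
    have "(\<Sum>i\<in>insert i0 T. b i * g i ^ m)
        = (\<Sum>i\<in>insert i0 T. a i * g i ^ Suc m) - g i0 * (\<Sum>i\<in>insert i0 T. a i * g i ^ m)"
      by (simp add: b_def sum_distrib_left sum_subtractf[symmetric] algebra_simps)
    also have "\<dots> = 0"
      by (simp only: insert.prems(2) mult_zero_right diff_zero)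
    finally show ?thesis
      using insert.hyps by (simp add: b_def)
  qed
  have a_T: "a j = 0" if "j \<in> T" for j
  proof -
    have "b j = 0"
      using insert.IH[OF _ b_sums that] insert.prems(1) by (simp add: inj_on_insert)
    moreover have "g j \<noteq> g i0"
      using that insert.prems(1) insert.hyps(2) by (auto simp: inj_on_def)
    ultimately show ?thesis by (simp add: b_def)
  qed
  have "(\<Sum>i\<in>insert i0 T. a i * g i ^ 0) = 0"
    by (rule insert.prems(2))
  then have "a i0 = 0"
    using insert.hyps a_T by simp
  then show ?case
    using insert.prems(3) a_T by auto
qed

lemma fundamental_domain_lattice_unique:
  assumes "fundamental_domain (lattice \<beta>) A" "a \<in> A" "a + of_int k * \<beta> \<in> A"
  shows "a + of_int k * \<beta> = a"
proof -
  have "a \<in> (\<lambda>l. a + l) ` lattice \<beta>" "a + of_int k * \<beta> \<in> (\<lambda>l. a + l) ` lattice \<beta>"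
    by (force simp: lattice_def intro: exI[of _ 0])+
  then show ?thesis
    using assms unfolding fundamental_domain_def by blast
qed

lemma fundamental_domain_lattice_obtain:
  assumes "fundamental_domain (lattice \<beta>) A"
  obtains k :: int where "x + of_int k * \<beta> \<in> A"
  using assms unfolding fundamental_domain_def lattice_def by blast

lemma Zmeas_translate_lattice: "Zmeas r (s + of_int k * \<alpha>) \<alpha> = Zmeas r s \<alpha>"
proof -
  have "(\<exists>m::int. x = s + of_int k * \<alpha> + of_int m * \<alpha>) \<longleftrightarrow> (\<exists>m::int. x = s + of_int m * \<alpha>)" for x
    by (metis (no_types, opaque_lifting) add.assoc add_diff_cancel_left' diff_add_cancel
        distrib_right of_int_add)
  then show ?thesis
    unfolding Zmeas_def by (simp add: fun_eq_iff)
qed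

lemma Zmeas_translate_dual_lattice:
  assumes "\<alpha> \<noteq> 0"
  shows "Zmeas (r + of_int k * (1 / \<alpha>)) s \<alpha>
    = cscale (exp (2 * pi * \<i> * complex_of_real (of_int k * s / \<alpha>))) (Zmeas r s \<alpha>)"
proof
  fix x
  show "Zmeas (r + of_int k * (1 / \<alpha>)) s \<alpha> x
    = cscale (exp (2 * pi * \<i> * complex_of_real (of_int k * s / \<alpha>))) (Zmeas r s \<alpha>) x"
  proof (cases "\<exists>m::int. x = s + of_int m * \<alpha>")
    case True
    then obtain m :: int where m: "x = s + of_int m * \<alpha>" by blast
    have "2 * pi * \<i> * complex_of_real ((r + of_int k * (1 / \<alpha>)) * x)
        = (2 * pi * \<i> * complex_of_real (r * x) + 2 * pi * \<i> * complex_of_real (of_int k * s / \<alpha>))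
          + \<i> * (of_int (k * m) * (of_real pi * 2))"
      using assms by (simp add: m field_simps)
    then have "exp (2 * pi * \<i> * complex_of_real ((r + of_int k * (1 / \<alpha>)) * x))
       = exp (2 * pi * \<i> * complex_of_real (r * x)) * exp (2 * pi * \<i> * complex_of_real (of_int k * s / \<alpha>))"
      by (metis exp_plus_2pin exp_add)
    then show ?thesis
      using True by (simp add: Zmeas_def cscale_def mult.commute)
  next
    case False
    then show ?thesis by (simp add: Zmeas_def cscale_def)
  qed
qed

lemma Zmeas_on_progression:
  assumes "fundamental_domain (lattice \<alpha>) K" "s \<in> K" "s0 \<in> K"
  shows "Zmeas r s \<alpha> (s0 + of_nat m * \<alpha>) =
    (if s = s0 then exp (2 * pi * \<i> * complex_of_real (r * s0))
       * exp (2 * pi * \<i> * complex_of_real (r * \<alpha>)) ^ m else 0)"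
proof (cases "s = s0")
  case True
  have "2 * pi * \<i> * complex_of_real (r * (s0 + of_nat m * \<alpha>))
     = 2 * pi * \<i> * complex_of_real (r * s0) + of_nat m * (2 * pi * \<i> * complex_of_real (r * \<alpha>))"
    by (simp add: algebra_simps)
  moreover have "\<exists>m'::int. s0 + of_nat m * \<alpha> = s + of_int m' * \<alpha>"
    using True by (intro exI[of _ "int m"]) simp
  ultimately show ?thesis
    using True by (simp add: Zmeas_def exp_add exp_of_nat_mult)
next
  case False
  have "s0 + of_nat m * \<alpha> \<noteq> s + of_int m' * \<alpha>" for m' :: int
  proof
    assume "s0 + of_nat m * \<alpha> = s + of_int m' * \<alpha>"
    then have "s0 + of_int (int m - m') * \<alpha> = s" by (simp add: algebra_simps)
    then show False
      using fundamental_domain_lattice_unique[OF assms(1,3)] assms(2) False by metis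
  qed
  then show ?thesis
    using False by (auto simp: Zmeas_def)
qed

lemma inj_on_exp_dual_fundamental_domain:
  assumes "\<alpha> \<noteq> 0" "fundamental_domain (lattice (1 / \<alpha>)) J"
  shows "inj_on (\<lambda>r. exp (2 * pi * \<i> * complex_of_real (r * \<alpha>))) J"
proof
  fix r r' assume r: "r \<in> J" "r' \<in> J"
    and "exp (2 * pi * \<i> * complex_of_real (r * \<alpha>)) = exp (2 * pi * \<i> * complex_of_real (r' * \<alpha>))"
  then obtain n :: int where
    "2 * pi * \<i> * complex_of_real (r * \<alpha>) = 2 * pi * \<i> * complex_of_real (r' * \<alpha>) + (of_int (2 * n) * pi) * \<i>"
    unfolding exp_eq by blast
  then have "Im (2 * pi * \<i> * complex_of_real (r * \<alpha>))
      = Im (2 * pi * \<i> * complex_of_real (r' * \<alpha>) + (of_int (2 * n) * pi) * \<i>)"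
    by simp
  then have "(2 * pi) * (r * \<alpha>) = (2 * pi) * (r' * \<alpha> + of_int n)"
    by (simp add: algebra_simps)
  then have "r * \<alpha> = r' * \<alpha> + of_int n"
    using pi_gt_zero by simp
  then have "r' + of_int n * (1 / \<alpha>) = r"
    using assms(1) by (simp add: field_simps)
  then show "r = r'"
    using fundamental_domain_lattice_unique[OF assms(2) r(2)] r(1) by metis
qed

lemma Zmeas_eq_scaled_Zmeas_fundamental_domains:
  assumes "\<alpha> \<noteq> 0" "fundamental_domain (lattice \<alpha>) K" "fundamental_domain (lattice (1 / \<alpha>)) J"
  obtains c r' s' where "r' \<in> J" "s' \<in> K" "Zmeas r s \<alpha> = cscale c (Zmeas r' s' \<alpha>)"
proof -
  obtain k :: int where k: "s + of_int k * \<alpha> \<in> K"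
    using fundamental_domain_lattice_obtain[OF assms(2)] .
  obtain j :: int where j: "r + of_int j * (1 / \<alpha>) \<in> J"
    using fundamental_domain_lattice_obtain[OF assms(3)] .
  define s' where "s' = s + of_int k * \<alpha>"
  define r' where "r' = r + of_int j * (1 / \<alpha>)"
  have "Zmeas r s \<alpha> = Zmeas (r' + of_int (- j) * (1 / \<alpha>)) s' \<alpha>"
    unfolding r'_def s'_def by (simp add: Zmeas_translate_lattice)
  also have "\<dots> = cscale (exp (2 * pi * \<i> * complex_of_real (of_int (- j) * s' / \<alpha>))) (Zmeas r' s' \<alpha>)"
    by (rule Zmeas_translate_dual_lattice[OF assms(1)])
  finally show ?thesis
    using that k j unfolding r'_def s'_def by blast
qed

lemma span_Zmeas_fundamental_domains:
  assumes "\<alpha> \<noteq> 0" "fundamental_domain (lattice \<alpha>) K" "fundamental_domain (lattice (1 / \<alpha>)) J"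
  shows "cmod.span {Zmeas r s \<alpha> | r s. r \<in> J \<and> s \<in> K} = cmod.span {Zmeas r s \<alpha> | r s. True}"
proof
  show "cmod.span {Zmeas r s \<alpha> | r s. r \<in> J \<and> s \<in> K} \<subseteq> cmod.span {Zmeas r s \<alpha> | r s. True}"
    by (rule cmod.span_mono) blast
  have "Zmeas r s \<alpha> \<in> cmod.span {Zmeas r s \<alpha> | r s. r \<in> J \<and> s \<in> K}" for r s
  proof -
    obtain c r' s' where "r' \<in> J" "s' \<in> K" "Zmeas r s \<alpha> = cscale c (Zmeas r' s' \<alpha>)"
      using Zmeas_eq_scaled_Zmeas_fundamental_domains[OF assms] .
    then show ?thesis
      by (auto intro: cmod.span_scale cmod.span_base)
  qed
  then show "cmod.span {Zmeas r s \<alpha> | r s. True} \<subseteq> cmod.span {Zmeas r s \<alpha> | r s. r \<in> J \<and> s \<in> K}"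
    by (intro cmod.span_minimal cmod.subspace_span) blast
qed

lemma Zmeas_combination_eq_0_imp_coeff_eq_0:
  fixes P :: "(real \<times> real) set" and c :: "real \<times> real \<Rightarrow> complex"
  assumes "\<alpha> \<noteq> 0" "fundamental_domain (lattice \<alpha>) K" "fundamental_domain (lattice (1 / \<alpha>)) J"
    and "finite P" "P \<subseteq> J \<times> K" "(\<Sum>(r, s)\<in>P. cscale (c (r, s)) (Zmeas r s \<alpha>)) = 0"
    and "(r0, s0) \<in> P"
  shows "c (r0, s0) = 0"
proof -
  define Q where "Q = {r. (r, s0) \<in> P}"
  define a where "a r = c (r, s0) * exp (2 * pi * \<i> * complex_of_real (r * s0))" for r
  define g where "g r = exp (2 * pi * \<i> * complex_of_real (r * \<alpha>))" for r
  have "Q \<subseteq> fst ` P"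
    by (force simp: Q_def)
  then have "finite Q"
    using assms(4) by (rule finite_subset[OF _ finite_imageI])
  have slice: "{p\<in>P. snd p = s0} = (\<lambda>r. (r, s0)) ` Q"
    by (force simp: Q_def)
  have s0: "s0 \<in> K"
    using assms(5,7) by blast
  have "(\<Sum>r\<in>Q. a r * g r ^ m) = 0" for m
  proof -
    have "0 = (\<Sum>(r, s)\<in>P. cscale (c (r, s)) (Zmeas r s \<alpha>)) (s0 + of_nat m * \<alpha>)"
      using assms(6) by simp
    also have "\<dots> = (\<Sum>(r, s)\<in>P. if s = s0 then a r * g r ^ m else 0)"
      unfolding sum_fun_apply
    proof (rule sum.cong[OF refl], clarify)
      fix r s assume "(r, s) \<in> P"
      then have "s \<in> K" using assms(5) by blast
      then show "cscale (c (r, s)) (Zmeas r s \<alpha>) (s0 + of_nat m * \<alpha>) = (if s = s0 then a r * g r ^ m else 0)"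
        by (simp add: cscale_def Zmeas_on_progression[OF assms(2) _ s0] a_def g_def)
    qed
    also have "\<dots> = (\<Sum>p\<in>{p\<in>P. snd p = s0}. a (fst p) * g (fst p) ^ m)"
      using assms(4) by (simp add: sum.inter_filter case_prod_beta)
    also have "\<dots> = (\<Sum>r\<in>Q. a r * g r ^ m)"
      using slice by (simp add: sum.reindex inj_on_def)
    finally show ?thesis by simp
  qed
  moreover have "inj_on g Q"
    unfolding g_def using inj_on_exp_dual_fundamental_domain[OF assms(1,3)]
    by (rule inj_on_subset) (use assms(5) in \<open>force simp: Q_def\<close>)
  moreover have "r0 \<in> Q"
    using assms(7) by (simp add: Q_def)
  ultimately have "a r0 = 0"
    using power_sums_eq_0_imp_coeff_eq_0[OF \<open>finite Q\<close>] by blast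
  then show ?thesis by (simp add: a_def)
qed

lemma independent_Zmeas_fundamental_domains:
  assumes "\<alpha> \<noteq> 0" "fundamental_domain (lattice \<alpha>) K" "fundamental_domain (lattice (1 / \<alpha>)) J"
  shows "\<not> cmod.dependent {Zmeas r s \<alpha> | r s. r \<in> J \<and> s \<in> K}"
proof
  define f where "f p = Zmeas (fst p) (snd p) \<alpha>" for p
  have "{Zmeas r s \<alpha> | r s. r \<in> J \<and> s \<in> K} = f ` (J \<times> K)"
    by (force simp: f_def)
  moreover assume "cmod.dependent {Zmeas r s \<alpha> | r s. r \<in> J \<and> s \<in> K}"
  ultimately obtain t u v where t: "finite t" "t \<subseteq> f ` (J \<times> K)" "(\<Sum>v\<in>t. cscale (u v) v) = 0"
    and v: "v \<in> t" "u v \<noteq> 0"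
    unfolding cmod.dependent_explicit by auto
  obtain P where P: "P \<subseteq> J \<times> K" "inj_on f P" "t = f ` P"
    using t(2) subset_image_inj by metis
  have "finite P"
    using t(1) P(2,3) finite_image_iff by blast
  have "(\<Sum>v\<in>t. cscale (u v) v) = (\<Sum>p\<in>P. cscale (u (f p)) (f p))"
    using P(2,3) by (simp add: sum.reindex)
  then have "(\<Sum>(r, s)\<in>P. cscale (u (f (r, s))) (Zmeas r s \<alpha>)) = 0"
    using t(3) by (simp add: f_def case_prod_beta)
  moreover obtain r0 s0 where "(r0, s0) \<in> P" "v = f (r0, s0)"
    using v(1) P(3) by auto
  ultimately have "u v = 0"
    using Zmeas_combination_eq_0_imp_coeff_eq_0[OF assms \<open>finite P\<close> P(1), where c = "\<lambda>p. u (f p)"]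
    by blast
  with v(2) show False ..
qed

theorem proposition3p6:
  fixes \<alpha> :: real and K J :: "real set"
  assumes "\<alpha> > 1"
    and "bounded K" and "fundamental_domain (lattice \<alpha>) K"
    and "bounded J" and "fundamental_domain (lattice (1 / \<alpha>)) J"
  shows "\<not> module.dependent cscale {Zmeas r s \<alpha> | r s. r \<in> J \<and> s \<in> K}
     \<and> module.span cscale {Zmeas r s \<alpha> | r s. r \<in> J \<and> s \<in> K}
        = module.span cscale {Zmeas r s \<alpha> | r s. True}"
proof -
  have "\<alpha> \<noteq> 0"
    using assms(1) by simp
  then show ?thesis
    using independent_Zmeas_fundamental_domains span_Zmeas_fundamental_domains assms(3,5) by blast
qed

end
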